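(* Let $J\ge 1$ be an integer, let $N_p,N_a$ be positive integers and $P_t,P_a,M,\kappa_B,\kappa_U,\kappa_I,\sigma^2$ be positive reals with $N_p\kappa_I<1$. Set $C_a=P_aN_a\kappa_U^2$ and $C_t=P_tM\kappa_B^2$, and for $l\in\{1,\dots,J\}$ define $$Q(l)=\frac{C_aC_tN_a(N_p\kappa_I)^{2(J-1)}+\sigma^2C_a(N_p\kappa_I)^{2(J-l)}}{C_t(N_p\kappa_I)^{2(l-1)}+\sigma^2}.$$ Then the optimal solution of $\max_{l\in\{1,\dots,J\}}Q(l)$ is $l_2^\star=J$.
   Context: Physical setting (for interpretation): an $M$-antenna base station with transmit power $P_t$ transfers energy to a single-antenna user over a cascaded line-of-sight path through $J$ intelligent reflecting surfaces numbered $1,\dots,J$ in order from the base station; surface $l$ is active ($N_a$ elements, per-element amplification power limit $P_a$) and the others are passive ($N_p$ elements each). $\kappa_B,\kappa_I,\kappa_U$ are the amplitude path gains of the base station–surface 1 link, each inter-surface link, and the surface $J$–user link; $\sigma^2$ is the amplification noise power per active element. With optimal beamforming, the user's received power as a function of the active surface index $l$ is $Q(l)$ above. Standing assumption: $N_p\kappa_I<1$. *)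

theory Defs
  imports Complex_Main
begin

definition Qpow :: "nat \<Rightarrow> nat \<Rightarrow> nat \<Rightarrow> real \<Rightarrow> real \<Rightarrow> real \<Rightarrow> real \<Rightarrow> real \<Rightarrow> real \<Rightarrow> real \<Rightarrow> nat \<Rightarrow> real" where
  "Qpow J Np Na Pt Pa M kB kU kI s2 l =
    (let Ca = Pa * real Na * kU^2; Ct = Pt * M * kB^2; x = real Np * kI in
     (Ca * Ct * real Na * x ^ (2 * (J - 1)) + s2 * Ca * x ^ (2 * (J - l)))
     / (Ct * x ^ (2 * (l - 1)) + s2))"

end

theory Submission
  imports Defs
begin

text \<open>With \<open>x = N\<^sub>p \<kappa>\<^sub>I \<in> (0,1)\<close>, moving the active surface towards the user
  raises the numerator of \<open>Q(l)\<close> (through \<open>x\<^bsup>2(J-l)\<^esup>\<close>) and lowers its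
  denominator (through \<open>x\<^bsup>2(l-1)\<^esup>\<close>), so \<open>Q\<close> is strictly increasing on
  \<open>{1..J}\<close> and attains its maximum only at \<open>l = J\<close>.\<close>

lemma Qpow_strict_mono_on:
  fixes J Np Na :: nat and Pt Pa M kB kU kI s2 :: real
  assumes "Np > 0" and "Na > 0" and "Pt > 0" and "Pa > 0" and "M > 0" and "kB > 0" and "kU > 0"
    and "kI > 0" and "s2 > 0" and "real Np * kI < 1"
  shows "strict_mono_on {1..J} (Qpow J Np Na Pt Pa M kB kU kI s2)"
proof (rule strict_mono_onI)
  fix l l' assume "l \<in> {1..J}" "l' \<in> {1..J}" "l < l'"
  define Ca where "Ca = Pa * real Na * kU^2"
  define Ct where "Ct = Pt * M * kB^2"
  define x where "x = real Np * kI"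
  have "Ca > 0" "Ct > 0" using assms by (simp_all add: Ca_def Ct_def)
  have "0 < x" "x < 1"
    using assms by (simp_all add: x_def zero_less_mult_iff)
  define num where "num k = Ca * Ct * real Na * x ^ (2 * (J - 1)) + s2 * Ca * x ^ (2 * (J - k))"
    for k
  define den where "den k = Ct * x ^ (2 * (k - 1)) + s2" for k
  have Q: "Qpow J Np Na Pt Pa M kB kU kI s2 k = num k / den k" for k
    by (simp add: Qpow_def Ca_def Ct_def x_def num_def den_def Let_def)
  have "x ^ (2 * (J - l)) < x ^ (2 * (J - l'))"
    using \<open>0 < x\<close> \<open>x < 1\<close> \<open>l < l'\<close> \<open>l' \<in> {1..J}\<close> by (intro power_strict_decreasing) auto
  then have "num l < num l'"
    using \<open>Ca > 0\<close> \<open>s2 > 0\<close> by (simp add: num_def)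
  moreover have "x ^ (2 * (l' - 1)) < x ^ (2 * (l - 1))"
    using \<open>0 < x\<close> \<open>x < 1\<close> \<open>l < l'\<close> \<open>l \<in> {1..J}\<close> by (intro power_strict_decreasing) auto
  then have "den l' < den l"
    using \<open>Ct > 0\<close> by (simp add: den_def)
  moreover have "0 \<le> num l" "0 < den l'"
    using \<open>Ca > 0\<close> \<open>Ct > 0\<close> \<open>0 < x\<close> \<open>s2 > 0\<close> \<open>Na > 0\<close>
    by (simp_all add: num_def den_def add_pos_pos add_nonneg_nonneg)
  ultimately show "Qpow J Np Na Pt Pa M kB kU kI s2 l < Qpow J Np Na Pt Pa M kB kU kI s2 l'"
    unfolding Q by (intro frac_less) auto
qed

theorem proposition2:
  fixes J Np Na :: nat and Pt Pa M kB kU kI s2 :: real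
  assumes "J \<ge> 1" and "Np > 0" and "Na > 0"
    and "Pt > 0" and "Pa > 0" and "M > 0" and "kB > 0" and "kU > 0" and "kI > 0" and "s2 > 0"
    and "real Np * kI < 1"
  shows "J \<in> {1..J} \<and>
    (\<forall>l\<in>{1..J}. l \<noteq> J \<longrightarrow> Qpow J Np Na Pt Pa M kB kU kI s2 l < Qpow J Np Na Pt Pa M kB kU kI s2 J)"
proof -
  have "strict_mono_on {1..J} (Qpow J Np Na Pt Pa M kB kU kI s2)"
    using assms(2-) by (rule Qpow_strict_mono_on)
  then show ?thesis
    using \<open>J \<ge> 1\<close> by (auto simp: strict_mono_on_def)
qed

end
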